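(* For all $n\ge 3$, the state complexity of $((U_{\{0\},n}(a,b,c))^* )^R$ is $2^n$.
   Context: The state complexity of a regular language is the number of states of its minimal complete DFA. For $n\ge 3$, $\mathcal{U}_n(a,b,c)$ is the DFA over $\{a,b,c\}$ with states $\{0,\dots,n-1\}$ and initial state $0$, where $a$ maps $i\mapsto i+1\pmod n$, $b$ swaps $0$ and $1$ fixing other states, and $c$ maps $n-1$ to $0$ fixing other states. $U_{\{0\},n}(a,b,c)$ is the language accepted by $\mathcal{U}_n(a,b,c)$ with final state set $\{0\}$. $L^*$ is the Kleene star and $L^R$ the reversal of $L$. *)

theory Defs
  imports Main
begin

datatype sym = SA | SB | SC

type_synonym lang = "sym list set"

definition complete_dfa :: "nat \<Rightarrow> (nat \<Rightarrow> sym \<Rightarrow> nat) \<Rightarrow> nat \<Rightarrow> nat set \<Rightarrow> bool" where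
  "complete_dfa k \<delta> q0 F \<longleftrightarrow> q0 < k \<and> (\<forall>q<k. \<forall>s. \<delta> q s < k) \<and> F \<subseteq> {..<k}"

definition dfa_lang :: "(nat \<Rightarrow> sym \<Rightarrow> nat) \<Rightarrow> nat \<Rightarrow> nat set \<Rightarrow> lang" where
  "dfa_lang \<delta> q0 F = {w. foldl \<delta> q0 w \<in> F}"

definition state_complexity :: "lang \<Rightarrow> nat" where
  "state_complexity L = (LEAST k. \<exists>\<delta> q0 F. complete_dfa k \<delta> q0 F \<and> dfa_lang \<delta> q0 F = L)"

fun U_delta :: "nat \<Rightarrow> nat \<Rightarrow> sym \<Rightarrow> nat" where
  "U_delta n i SA = (i + 1) mod n"
| "U_delta n i SB = (if i = 0 then 1 else if i = 1 then 0 else i)"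
| "U_delta n i SC = (if i = n - 1 then 0 else i)"

definition U0 :: "nat \<Rightarrow> lang" where
  "U0 n = dfa_lang (U_delta n) 0 {0}"

definition kstar :: "lang \<Rightarrow> lang" where
  "kstar L = {concat ws | ws. set ws \<subseteq> L}"

definition reversal :: "lang \<Rightarrow> lang" where
  "reversal L = rev ` L"

end

theory Submission
  imports Defs "HOL-Library.Nat_Bijection" "HOL-Combinatorics.Transposition"
begin

(*
  Let D be a complete DFA with state set {0..<k}, all of whose states are reachable.
  The reversal of its language L is recognised by the "reversed subset automaton":
  after reading w it remembers the set of states q with foldl delta q (rev w) in F,
  which gives an upper bound of 2^k states.  Conversely, if every subset of {0..<k}
  arises as such a set ("co-reachable"), then the 2^k words producing these sets are
  pairwise distinguishable, so every DFA for the reversal needs 2^k states.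

  For U_n with final state set {0}: the star changes nothing, since the language is
  closed under concatenation and contains the empty word.  Its states are reachable
  by powers of a, and every subset of {0..<n} is co-reachable: a acts as a rotation,
  a^(n-t) b a^t as the transposition (t t+1), and c adds the state n-1 to any
  co-reachable set containing 0 but not n-1.  Conjugating c by these permutations
  lets us add an arbitrary state to a nonempty co-reachable set.
*)

lemma run_less:
  assumes "complete_dfa k \<delta> q0 F" and "q < k"
  shows "foldl \<delta> q w < k"
  using assms(2) by (induction w arbitrary: q) (use assms(1) in \<open>auto simp: complete_dfa_def\<close>)

definition pre_on :: "nat \<Rightarrow> (nat \<Rightarrow> nat) \<Rightarrow> nat set \<Rightarrow> nat set" where
  "pre_on k f S = {q. q < k \<and> f q \<in> S}"

text \<open>A set of states is co-reachable if it is the set of states from which some word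
  leads into F; these are the states of the reversed subset automaton.\<close>
definition coreachable :: "(nat \<Rightarrow> sym \<Rightarrow> nat) \<Rightarrow> nat \<Rightarrow> nat set \<Rightarrow> nat set \<Rightarrow> bool" where
  "coreachable \<delta> k F S \<longleftrightarrow> (\<exists>u. pre_on k (\<lambda>q. foldl \<delta> q u) F = S)"

lemma coreachable_pre:
  assumes D: "complete_dfa k \<delta> q0 F" and S: "coreachable \<delta> k F S"
    and w: "\<And>q. q < k \<Longrightarrow> foldl \<delta> q w = f q"
  shows "coreachable \<delta> k F (pre_on k f S)"
proof -
  obtain u where u: "S = pre_on k (\<lambda>q. foldl \<delta> q u) F"
    using S unfolding coreachable_def by blast
  have "pre_on k f S = pre_on k (\<lambda>q. foldl \<delta> q (w @ u)) F"
    unfolding u pre_on_def by (auto simp: w[symmetric] run_less[OF D])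
  then show ?thesis unfolding coreachable_def by blast
qed

lemma pre_on_conjugate_insert:
  assumes S: "S \<subseteq> {..<k}" and p: "p < k"
    and inv: "\<And>q. q < k \<Longrightarrow> f q < k \<and> g q < k \<and> f (g q) = q \<and> g (f q) = q"
  shows "pre_on k g (insert p (pre_on k f S)) = insert (f p) S"
proof (rule set_eqI)
  fix q
  show "q \<in> pre_on k g (insert p (pre_on k f S)) \<longleftrightarrow> q \<in> insert (f p) S"
  proof (cases "q < k")
    case True
    have "g q = p \<longleftrightarrow> q = f p" using inv True p by metis
    then show ?thesis using inv True unfolding pre_on_def by auto
  next
    case False
    then show ?thesis using S inv[OF p] unfolding pre_on_def by auto
  qed
qed

lemma mem_reversal: "w \<in> reversal L \<longleftrightarrow> rev w \<in> L"
  unfolding reversal_def by (auto simp: image_iff intro!: bexI[of _ "rev w"])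

lemma state_complexity_eqI:
  assumes "complete_dfa k \<delta> q0 F" and "dfa_lang \<delta> q0 F = L"
    and "\<And>k' \<delta>' q0' F'. complete_dfa k' \<delta>' q0' F' \<Longrightarrow> dfa_lang \<delta>' q0' F' = L \<Longrightarrow> k \<le> k'"
  shows "state_complexity L = k"
  unfolding state_complexity_def using assms by (intro Least_equality) blast+

lemma fooling_set_bound:
  assumes D: "complete_dfa k \<delta> q0 F"
    and dist: "\<And>i j. i \<in> I \<Longrightarrow> j \<in> I \<Longrightarrow> i \<noteq> j \<Longrightarrow>
                 \<exists>z. (x i @ z \<in> dfa_lang \<delta> q0 F) \<noteq> (x j @ z \<in> dfa_lang \<delta> q0 F)"
  shows "card I \<le> k"
proof -
  define st where "st i = foldl \<delta> q0 (x i)" for i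
  have "inj_on st I"
    using dist unfolding inj_on_def st_def dfa_lang_def by fastforce
  moreover have "st ` I \<subseteq> {..<k}"
    using run_less[OF D] D unfolding st_def complete_dfa_def by auto
  ultimately have "card I \<le> card {..<k}" by (intro card_inj_on_le) auto
  then show ?thesis by simp
qed

lemma set_encode_less_power:
  assumes "A \<subseteq> {..<m}"
  shows "set_encode A < 2 ^ m"
proof -
  have "set_encode A \<le> (\<Sum>i\<in>{q. q < m}. 2 ^ i)"
    unfolding set_encode_def using assms by (intro sum_mono2) auto
  also have "\<dots> = 2 ^ m - 1" by (rule mask_eq_sum_exp[symmetric])
  finally show ?thesis by (simp add: less_eq_iff_succ_less)
qed

text \<open>The reversed subset automaton, with subsets of {0..<k} encoded as numbers below 2^k.\<close>
lemma reversal_upper: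
  assumes D: "complete_dfa k \<delta> q0 F"
  shows "\<exists>\<delta>' q0' F'. complete_dfa (2 ^ k) \<delta>' q0' F' \<and>
                     dfa_lang \<delta>' q0' F' = reversal (dfa_lang \<delta> q0 F)"
proof -
  let ?R = "\<lambda>w. pre_on k (\<lambda>q. foldl \<delta> q (rev w)) F"
  define \<delta>' where "\<delta>' s x = set_encode (pre_on k (\<lambda>q. \<delta> q x) (set_decode s))" for s x
  define F' where "F' = {s. s < 2 ^ k \<and> q0 \<in> set_decode s}"
  have sub: "\<And>f S. pre_on k f S \<subseteq> {..<k}" unfolding pre_on_def by auto
  have fin: "\<And>f S. finite (pre_on k f S)" using sub finite_subset by blast
  have run: "foldl \<delta>' (set_encode (?R [])) w = set_encode (?R w)" for w
  proof (induction w rule: rev_induct)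
    case (snoc x w)
    have "?R (w @ [x]) = pre_on k (\<lambda>q. \<delta> q x) (?R w)"
      using run_less[OF D] D unfolding pre_on_def complete_dfa_def by auto
    then show ?case using snoc fin unfolding \<delta>'_def by simp
  qed simp
  have "complete_dfa (2 ^ k) \<delta>' (set_encode (?R [])) F'"
    unfolding complete_dfa_def \<delta>'_def F'_def using sub by (auto intro: set_encode_less_power)
  moreover have "dfa_lang \<delta>' (set_encode (?R [])) F' = reversal (dfa_lang \<delta> q0 F)"
  proof (rule set_eqI)
    fix w
    have "w \<in> dfa_lang \<delta>' (set_encode (?R [])) F' \<longleftrightarrow> q0 \<in> ?R w"
      unfolding dfa_lang_def F'_def run using fin sub set_encode_less_power by simp
    also have "\<dots> \<longleftrightarrow> w \<in> reversal (dfa_lang \<delta> q0 F)"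
      using D unfolding pre_on_def mem_reversal dfa_lang_def complete_dfa_def by simp
    finally show "w \<in> dfa_lang \<delta>' (set_encode (?R [])) F' \<longleftrightarrow> w \<in> reversal (dfa_lang \<delta> q0 F)" .
  qed
  ultimately show ?thesis by blast
qed

text \<open>If all states are reachable and all subsets of states co-reachable, then the words
  producing the 2^k co-reachable sets are pairwise distinguishable for the reversal.\<close>
lemma reversal_lower:
  assumes D: "complete_dfa k \<delta> q0 F"
    and reach: "\<And>q. q < k \<Longrightarrow> \<exists>r. foldl \<delta> q0 r = q"
    and coreach: "\<And>S. S \<subseteq> {..<k} \<Longrightarrow> coreachable \<delta> k F S"
    and D': "complete_dfa k' \<delta>' q0' F'" and L': "dfa_lang \<delta>' q0' F' = reversal (dfa_lang \<delta> q0 F)"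
  shows "2 ^ k \<le> k'"
proof -
  obtain u where u: "\<And>S. S \<subseteq> {..<k} \<Longrightarrow> pre_on k (\<lambda>q. foldl \<delta> q (u S)) F = S"
    using coreach unfolding coreachable_def by metis
  obtain r where r: "\<And>q. q < k \<Longrightarrow> foldl \<delta> q0 (r q) = q"
    using reach by metis
  have test: "rev (u S) @ rev (r q) \<in> dfa_lang \<delta>' q0' F' \<longleftrightarrow> q \<in> S"
    if "S \<subseteq> {..<k}" and "q < k" for S q
  proof -
    have "rev (u S) @ rev (r q) \<in> dfa_lang \<delta>' q0' F' \<longleftrightarrow> foldl \<delta> q (u S) \<in> F"
      using L' r[OF \<open>q < k\<close>] by (simp add: mem_reversal dfa_lang_def)
    also have "\<dots> \<longleftrightarrow> q \<in> S" using u[OF \<open>S \<subseteq> {..<k}\<close>] \<open>q < k\<close> unfolding pre_on_def by blast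
    finally show ?thesis .
  qed
  have "card (Pow {..<k}) \<le> k'"
  proof (rule fooling_set_bound[OF D', where x = "\<lambda>S. rev (u S)"])
    fix S T assume "S \<in> Pow {..<k}" "T \<in> Pow {..<k}" "S \<noteq> T"
    then obtain q where "q < k" "q \<in> S \<longleftrightarrow> q \<notin> T" by blast
    then show "\<exists>z. (rev (u S) @ z \<in> dfa_lang \<delta>' q0' F') \<noteq> (rev (u T) @ z \<in> dfa_lang \<delta>' q0' F')"
      using test \<open>S \<in> Pow {..<k}\<close> \<open>T \<in> Pow {..<k}\<close> by blast
  qed
  then show ?thesis by (simp add: card_Pow)
qed

theorem sc_reversal_full:
  assumes "complete_dfa k \<delta> q0 F"
    and "\<And>q. q < k \<Longrightarrow> \<exists>r. foldl \<delta> q0 r = q"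
    and "\<And>S. S \<subseteq> {..<k} \<Longrightarrow> coreachable \<delta> k F S"
  shows "state_complexity (reversal (dfa_lang \<delta> q0 F)) = 2 ^ k"
proof -
  obtain \<delta>' q0' F' where "complete_dfa (2 ^ k) \<delta>' q0' F'"
    and "dfa_lang \<delta>' q0' F' = reversal (dfa_lang \<delta> q0 F)"
    using reversal_upper[OF assms(1)] by blast
  then show ?thesis
    using reversal_lower[OF assms] by (intro state_complexity_eqI) blast+
qed

lemma kstar_return_language:
  "kstar (dfa_lang \<delta> q0 {q0}) = dfa_lang \<delta> q0 {q0}"
proof
  have "set ws \<subseteq> dfa_lang \<delta> q0 {q0} \<Longrightarrow> concat ws \<in> dfa_lang \<delta> q0 {q0}" for ws
    by (induction ws) (auto simp: dfa_lang_def)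
  then show "kstar (dfa_lang \<delta> q0 {q0}) \<subseteq> dfa_lang \<delta> q0 {q0}"
    unfolding kstar_def by blast
  show "dfa_lang \<delta> q0 {q0} \<subseteq> kstar (dfa_lang \<delta> q0 {q0})"
    unfolding kstar_def by (auto intro!: exI[of _ "[_]"])
qed

lemma U_complete: "n \<ge> 2 \<Longrightarrow> complete_dfa n (U_delta n) 0 {0}"
  unfolding complete_dfa_def
proof (intro conjI allI impI)
  show "U_delta n q s < n" if "n \<ge> 2" "q < n" for q s
    using that by (cases s) auto
qed auto

lemma run_a_power:
  assumes "q < n"
  shows "foldl (U_delta n) q (replicate m SA) = (q + m) mod n"
  using assms
proof (induction m arbitrary: q)
  case (Suc m)
  then show ?case by (simp add: mod_add_left_eq)
qed simp

lemma rotation_cancel: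
  fixes q n m m' :: nat
  assumes "q < n" and "(m + m') mod n = 0"
  shows "((q + m) mod n + m') mod n = q"
proof -
  have "((q + m) mod n + m') mod n = (q + (m + m')) mod n"
    by (simp add: mod_add_left_eq add.assoc)
  also have "\<dots> = (q + (m + m') mod n) mod n" by (rule mod_add_right_eq[symmetric])
  finally show ?thesis using assms by simp
qed

lemma run_swap_word:
  assumes t: "t + 1 < n" and q: "q < n"
  shows "foldl (U_delta n) q (replicate (n - t) SA @ [SB] @ replicate t SA)
           = Transposition.transpose t (t + 1) q"
proof -
  define m where "m = (q + (n - t)) mod n"
  have m: "m = (if q < t then q + n - t else q - t)"
    using t q unfolding m_def by (auto simp: mod_if)
  have "U_delta n m SB < n" using U_complete t m q unfolding complete_dfa_def by auto
  then have "foldl (U_delta n) q (replicate (n - t) SA @ [SB] @ replicate t SA)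
               = (U_delta n m SB + t) mod n"
    using run_a_power q unfolding m_def by simp
  also have "\<dots> = Transposition.transpose t (t + 1) q"
    using t q unfolding m transpose_def by auto
  finally show ?thesis .
qed

abbreviation U_coreachable :: "nat \<Rightarrow> nat set \<Rightarrow> bool" where
  "U_coreachable n \<equiv> coreachable (U_delta n) n {0}"

lemma coreachable_c_step:
  assumes n: "n \<ge> 2" and S: "U_coreachable n S" "S \<subseteq> {..<n}" and "0 \<in> S" "n - 1 \<notin> S"
  shows "U_coreachable n (insert (n - 1) S)"
proof -
  have "pre_on n (\<lambda>q. U_delta n q SC) S = insert (n - 1) S"
    using assms unfolding pre_on_def by auto
  then show ?thesis
    using coreachable_pre[OF U_complete[OF n] S(1), of "[SC]" "\<lambda>q. U_delta n q SC"] by simp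
qed

text \<open>Moving an element j of S down to 0 by adjacent transpositions (which fix n-1),
  applying c, and moving back adds n-1 to S.\<close>
lemma coreachable_insert_last:
  assumes n: "n \<ge> 2"
  shows "j < n - 1 \<Longrightarrow> j \<in> S \<Longrightarrow> n - 1 \<notin> S \<Longrightarrow> S \<subseteq> {..<n} \<Longrightarrow> U_coreachable n S
           \<Longrightarrow> U_coreachable n (insert (n - 1) S)"
proof (induction j arbitrary: S)
  case 0
  then show ?case using coreachable_c_step[OF n] by blast
next
  case (Suc j)
  let ?\<tau> = "Transposition.transpose j (j + 1)"
  have \<tau>: "\<And>q. q < n \<Longrightarrow> foldl (U_delta n) q (replicate (n - j) SA @ [SB] @ replicate j SA) = ?\<tau> q"
    using Suc.prems(1) by (intro run_swap_word) auto
  have perm: "\<And>q. q < n \<Longrightarrow> ?\<tau> q < n \<and> ?\<tau> q < n \<and> ?\<tau> (?\<tau> q) = q \<and> ?\<tau> (?\<tau> q) = q"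
    using Suc.prems(1) unfolding transpose_def by auto
  let ?S' = "pre_on n ?\<tau> S"
  have "U_coreachable n ?S'"
    using coreachable_pre[OF U_complete[OF n] Suc.prems(5) \<tau>] .
  moreover have "j \<in> ?S'" "n - 1 \<notin> ?S'" "?S' \<subseteq> {..<n}"
    using Suc.prems unfolding pre_on_def by auto
  ultimately have "U_coreachable n (insert (n - 1) ?S')"
    using Suc.IH Suc.prems(1) by simp
  then have "U_coreachable n (pre_on n ?\<tau> (insert (n - 1) ?S'))"
    using coreachable_pre[OF U_complete[OF n] _ \<tau>] by blast
  moreover have "pre_on n ?\<tau> (insert (n - 1) ?S') = insert (n - 1) S"
    using pre_on_conjugate_insert[OF Suc.prems(4) _ perm] n Suc.prems(1) by simp
  ultimately show ?case by simp
qed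

text \<open>Any state can be added to a nonempty co-reachable set: rotate it to n-1 first.\<close>
lemma coreachable_insert:
  assumes n: "n \<ge> 2" and S: "U_coreachable n S" "S \<subseteq> {..<n}" "S \<noteq> {}"
    and x: "x < n" "x \<notin> S"
  shows "U_coreachable n (insert x S)"
proof -
  let ?f = "\<lambda>q. (q + (x + 1)) mod n" and ?g = "\<lambda>q. (q + (n - x - 1)) mod n"
  have runs: "\<And>q. q < n \<Longrightarrow> foldl (U_delta n) q (replicate (x + 1) SA) = ?f q"
             "\<And>q. q < n \<Longrightarrow> foldl (U_delta n) q (replicate (n - x - 1) SA) = ?g q"
    using run_a_power by blast+
  have "?f (?g q) = q" "?g (?f q) = q" if "q < n" for q
    using that x by (intro rotation_cancel; simp)+
  then have perm: "\<And>q. q < n \<Longrightarrow> ?f q < n \<and> ?g q < n \<and> ?f (?g q) = q \<and> ?g (?f q) = q"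
    by simp
  have last: "?f (n - 1) = x" using x n by simp
  let ?S1 = "pre_on n ?f S"
  have "U_coreachable n ?S1"
    using coreachable_pre[OF U_complete[OF n] S(1) runs(1)] .
  moreover obtain y where y: "y \<in> S" "y < n" using S(2,3) by blast
  have "?g y < n" "?g y \<noteq> n - 1" using perm[OF y(2)] last y(1) x(2) by metis+
  then have "?g y \<in> ?S1" "?g y < n - 1"
    using perm[OF y(2)] y(1) unfolding pre_on_def by auto
  moreover have "n - 1 \<notin> ?S1" "?S1 \<subseteq> {..<n}"
    using last x(2) unfolding pre_on_def by auto
  ultimately have "U_coreachable n (insert (n - 1) ?S1)"
    using coreachable_insert_last[OF n] by blast
  then have "U_coreachable n (pre_on n ?g (insert (n - 1) ?S1))"
    using coreachable_pre[OF U_complete[OF n] _ runs(2)] by blast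
  moreover have "pre_on n ?g (insert (n - 1) ?S1) = insert x S"
    using pre_on_conjugate_insert[OF S(2) _ perm] n last by simp
  ultimately show ?thesis by simp
qed

text \<open>Every subset of {0..<n} is co-reachable in U_n: the empty set via c a, singletons
  via powers of a, and larger sets by repeated insertion.\<close>
lemma all_coreachable:
  assumes n: "n \<ge> 2" and S: "S \<subseteq> {..<n}"
  shows "U_coreachable n S"
proof (cases "S = {}")
  case True
  have "pre_on n (\<lambda>q. foldl (U_delta n) q [SC, SA]) {0} = {}"
    using n unfolding pre_on_def by auto
  then show ?thesis using True unfolding coreachable_def by blast
next
  case False
  have "finite S" using S finite_subset by blast
  then show ?thesis using False S
  proof (induction S rule: finite_ne_induct)
    case (singleton x)
    have "(q + (n - x)) mod n = 0 \<longleftrightarrow> q = x" if "q < n" for q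
      using rotation_cancel[OF that, of "n - x" x] singleton by auto
    then have "pre_on n (\<lambda>q. foldl (U_delta n) q (replicate (n - x) SA)) {0} = {x}"
      using singleton run_a_power unfolding pre_on_def by auto
    then show ?case unfolding coreachable_def by blast
  next
    case (insert x F)
    then show ?case using coreachable_insert[OF n] by simp
  qed
qed

theorem theorem7:
  fixes n :: nat
  assumes "n \<ge> 3"
  shows "state_complexity (reversal (kstar (U0 n))) = 2 ^ n"
proof -
  have n: "n \<ge> 2" using assms by simp
  have "\<exists>r. foldl (U_delta n) 0 r = q" if "q < n" for q
    using run_a_power[of 0 n q] that by auto
  then have "state_complexity (reversal (dfa_lang (U_delta n) 0 {0})) = 2 ^ n"
    using sc_reversal_full[OF U_complete[OF n]] all_coreachable[OF n] by blast
  then show ?thesis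
    unfolding U0_def kstar_return_language .
qed

end
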